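(* Let $G$ be a connected oriented diagram with $V\ge 2$ vertices, internal legs $\ell_1,\dots,\ell_I$, and no tadpoles. For each leg $j$, let $a_j$ and $b_j$ denote the tail and head vertices of $\ell_j$. Fix complex numbers $\zeta_j^\pm,\xi_j^\pm$ with $\operatorname{Im}\zeta_j^+>0$, $\operatorname{Im}\xi_j^+>0$, $\operatorname{Im}\zeta_j^-<0$, $\operatorname{Im}\xi_j^-<0$. For real $t\neq 0$ define $$\tilde z_j(t)=i\theta(t)e^{it\zeta_j^+}-i\theta(-t)e^{it\zeta_j^-},\qquad \tilde u_j(t)=i\theta(t)e^{it\zeta_j^+}-i\theta(-t)e^{it\xi_j^-},$$ $$\tilde v_j(t)=i\theta(t)e^{it\xi_j^+}-i\theta(-t)e^{it\zeta_j^-},\qquad \tilde w_j(t)=i\theta(t)e^{it\xi_j^+}-i\theta(-t)e^{it\xi_j^-},$$ where $\theta$ is the Heaviside step function. For a marking $M$ (a subset of the vertex set, with $m=|M|$), let $\tilde p_{Mj}$ be given by: - $\tilde p_{Mj}=\tilde z_j$ if $a_j,b_j$ are both unmarked; - $\tilde p_{Mj}=\tilde w_j$ if both are marked; - $\tilde p_{Mj}=\tilde u_j$ if $a_j$ is unmarked and $b_j$ is marked; - $\tilde p_{Mj}=\tilde v_j$ if $a_j$ is marked and $b_j$ is unmarked. Then for every $V$-tuple of pairwise distinct real times $t_1,\dots,t_V$ (where $t_a$ is attached to vertex $\nu_a$), $$\sum_{M}(-1)^{|M|}\prod_{j=1}^I\tilde p_{Mj}(t_{a_j}-t_{b_j})=0,$$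 the sum running over all markings $M$.
   Context: A diagram is a finite graph with vertices $\nu_1,\dots,\nu_V$ and oriented internal legs $\ell_1,\dots,\ell_I$ (multiple legs allowed); a tadpole is a leg whose two endpoints coincide. Let $c$ be the number of connected components and $L=I-V+c$. The diagram is oriented if there exist $L$ simple cycles that are directed cycles with respect to the leg orientations and whose edge-indicator vectors in $\mathbb{R}^I$ are linearly independent. The functions $\tilde z_j,\tilde w_j,\tilde u_j,\tilde v_j$ are the Fourier transforms $\int\frac{dE}{2\pi}e^{iEt}(\cdot)$ of $z_j,w_j,u_j,v_j$ obtained with $\sigma_j^\pm(E)=1/(E-\zeta_j^\pm)$ and $\tau_j^\pm(E)=1/(E-\xi_j^\pm)$, where $z_j=\sigma_j^++\sigma_j^-$, $w_j=\tau_j^++\tau_j^-$, $u_j=\sigma_j^++\tau_j^-$, $v_j=\sigma_j^-+\tau_j^+$. *)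

theory Defs
  imports Complex_Main
begin

text \<open>A diagram: vertices 0..<V, legs 0..<I; leg j has tail a j and head b j.\<close>

definition legs_ok :: "nat \<Rightarrow> nat \<Rightarrow> (nat \<Rightarrow> nat) \<Rightarrow> (nat \<Rightarrow> nat) \<Rightarrow> bool" where
  "legs_ok V I a b \<longleftrightarrow> (\<forall>j<I. a j < V \<and> b j < V)"

definition no_tadpoles :: "nat \<Rightarrow> (nat \<Rightarrow> nat) \<Rightarrow> (nat \<Rightarrow> nat) \<Rightarrow> bool" where
  "no_tadpoles I a b \<longleftrightarrow> (\<forall>j<I. a j \<noteq> b j)"

definition adjacent :: "nat \<Rightarrow> (nat \<Rightarrow> nat) \<Rightarrow> (nat \<Rightarrow> nat) \<Rightarrow> nat \<Rightarrow> nat \<Rightarrow> bool" where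
  "adjacent I a b x y \<longleftrightarrow> (\<exists>j<I. (a j = x \<and> b j = y) \<or> (a j = y \<and> b j = x))"

definition diagram_connected :: "nat \<Rightarrow> nat \<Rightarrow> (nat \<Rightarrow> nat) \<Rightarrow> (nat \<Rightarrow> nat) \<Rightarrow> bool" where
  "diagram_connected V I a b \<longleftrightarrow> (\<forall>x<V. \<forall>y<V. (adjacent I a b)\<^sup>*\<^sup>* x y)"

definition directed_simple_cycle :: "nat \<Rightarrow> (nat \<Rightarrow> nat) \<Rightarrow> (nat \<Rightarrow> nat) \<Rightarrow> nat list \<Rightarrow> bool" where
  "directed_simple_cycle I a b es \<longleftrightarrow>
     es \<noteq> [] \<and> distinct es \<and> (\<forall>e\<in>set es. e < I) \<and>
     (\<forall>k<length es. b (es ! k) = a (es ! ((k + 1) mod length es))) \<and>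
     distinct (map a es)"

definition edge_indicator :: "nat set \<Rightarrow> nat \<Rightarrow> real" where
  "edge_indicator C j = (if j \<in> C then 1 else 0)"

definition indicators_lin_indep :: "nat \<Rightarrow> nat \<Rightarrow> (nat \<Rightarrow> nat set) \<Rightarrow> bool" where
  "indicators_lin_indep I L C \<longleftrightarrow>
     (\<forall>c :: nat \<Rightarrow> real. (\<forall>j<I. (\<Sum>k<L. c k * edge_indicator (C k) j) = 0) \<longrightarrow> (\<forall>k<L. c k = 0))"

text \<open>Oriented (for a connected diagram, c = 1, so L = I - V + 1).\<close>
definition oriented :: "nat \<Rightarrow> nat \<Rightarrow> (nat \<Rightarrow> nat) \<Rightarrow> (nat \<Rightarrow> nat) \<Rightarrow> nat \<Rightarrow> bool" where
  "oriented V I a b L \<longleftrightarrow>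
     (\<exists>cyc :: nat \<Rightarrow> nat list. (\<forall>k<L. directed_simple_cycle I a b (cyc k)) \<and>
        indicators_lin_indep I L (\<lambda>k. set (cyc k)))"

definition heaviside :: "real \<Rightarrow> complex" where
  "heaviside t = (if t > 0 then 1 else 0)"

definition prop_tilde :: "complex \<Rightarrow> complex \<Rightarrow> real \<Rightarrow> complex" where
  "prop_tilde p q t = \<i> * heaviside t * exp (\<i> * of_real t * p)
                     - \<i> * heaviside (- t) * exp (\<i> * of_real t * q)"

text \<open>z~ = prop_tilde zeta+ zeta-, u~ = prop_tilde zeta+ xi-, v~ = prop_tilde xi+ zeta-, w~ = prop_tilde xi+ xi-.\<close>
definition p_marked ::
  "(nat \<Rightarrow> nat) \<Rightarrow> (nat \<Rightarrow> nat) \<Rightarrow> (nat \<Rightarrow> complex) \<Rightarrow> (nat \<Rightarrow> complex) \<Rightarrow> (nat \<Rightarrow> complex) \<Rightarrow> (nat \<Rightarrow> complex)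
   \<Rightarrow> nat set \<Rightarrow> nat \<Rightarrow> real \<Rightarrow> complex" where
  "p_marked a b zp zm xp xm M j =
     (if a j \<notin> M \<and> b j \<notin> M then prop_tilde (zp j) (zm j)
      else if a j \<in> M \<and> b j \<in> M then prop_tilde (xp j) (xm j)
      else if a j \<notin> M \<and> b j \<in> M then prop_tilde (zp j) (xm j)
      else prop_tilde (xp j) (zm j))"

end

theory Submission
  imports Defs
begin

text \<open>For $t<0$ only the $-$ part of a propagator survives, and for $t>0$ only the $+$ part. In the marked propagator the $+$ part of leg $j$ is chosen by the marking of its
  tail $a_j$ and the $-$ part by that of its head $b_j$. Hence, at the vertex $v$ with the earliest
  time, every incident leg evaluates only the part chosen by its other endpoint, so toggling the
  mark of $v$ leaves each product unchanged while flipping the sign $(-1)^{|M|}$: the markings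
  cancel in pairs.\<close>

lemma prop_tilde_neg:
  assumes "t < 0"
  shows "prop_tilde p q t = - \<i> * exp (\<i> * of_real t * q)"
  using assms by (simp add: prop_tilde_def heaviside_def)

lemma prop_tilde_pos:
  assumes "t > 0"
  shows "prop_tilde p q t = \<i> * exp (\<i> * of_real t * p)"
  using assms by (simp add: prop_tilde_def heaviside_def)

lemma p_marked_insert_earliest:
  assumes "v \<notin> M" and "a j \<noteq> b j"
    and "a j = v \<Longrightarrow> t (a j) < t (b j)"
    and "b j = v \<Longrightarrow> t (b j) < t (a j)"
  shows "p_marked a b zp zm xp xm (insert v M) j (t (a j) - t (b j)) =
         p_marked a b zp zm xp xm M j (t (a j) - t (b j))"
proof -
  consider "a j = v" | "b j = v" | "a j \<noteq> v" "b j \<noteq> v" by blast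
  then show ?thesis
  proof cases
    case 1
    then have "t (a j) - t (b j) < 0" using assms by simp
    with 1 assms(1,2) show ?thesis
      by (simp add: p_marked_def prop_tilde_neg)
  next
    case 2
    then have "t (a j) - t (b j) > 0" using assms by simp
    with 2 assms(1,2) show ?thesis
      by (simp add: p_marked_def prop_tilde_pos)
  qed (simp add: p_marked_def)
qed

lemma sum_Pow_insert_alternating_eq_0:
  fixes F :: "'a set \<Rightarrow> 'b::comm_ring_1"
  assumes "finite B" and "v \<notin> B"
    and "\<And>M. M \<subseteq> B \<Longrightarrow> F (insert v M) = F M"
  shows "(\<Sum>M\<in>Pow (insert v B). (-1) ^ card M * F M) = 0"
proof -
  have "(\<Sum>M\<in>Pow (insert v B). (-1) ^ card M * F M)
      = (\<Sum>M\<in>Pow B. (-1) ^ card M * F M) + (\<Sum>M\<in>insert v ` Pow B. (-1) ^ card M * F M)"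
    unfolding Pow_insert using assms(1,2) by (intro sum.union_disjoint) auto
  also have "(\<Sum>M\<in>insert v ` Pow B. (-1) ^ card M * F M)
      = (\<Sum>M\<in>Pow B. (-1) ^ card (insert v M) * F (insert v M))"
    using assms(2) by (intro sum.reindex[unfolded comp_def]) (auto simp: inj_on_def)
  also have "\<dots> = (\<Sum>M\<in>Pow B. - ((-1) ^ card M * F M))"
  proof (rule sum.cong[OF refl])
    fix M assume "M \<in> Pow B"
    then have "finite M" "v \<notin> M" "M \<subseteq> B"
      using assms(1,2) finite_subset by auto
    then show "(-1) ^ card (insert v M) * F (insert v M) = - ((-1) ^ card M * F M)"
      using assms(3) by simp
  qed
  finally show ?thesis by (simp add: sum_negf)
qed

lemma obtain_earliest:
  fixes t :: "'a \<Rightarrow> 'b::linorder"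
  assumes "finite A" and "A \<noteq> {}" and "inj_on t A"
  obtains v where "v \<in> A" and "\<And>u. u \<in> A \<Longrightarrow> u \<noteq> v \<Longrightarrow> t v < t u"
proof -
  have "Min (t ` A) \<in> t ` A" using assms(1,2) by simp
  then obtain v where v: "v \<in> A" "t v = Min (t ` A)" by auto
  have "t v < t u" if "u \<in> A" "u \<noteq> v" for u
  proof -
    have "t v \<le> t u" using v assms(1) that(1) by simp
    moreover have "t v \<noteq> t u" using assms(3) that v(1) by (auto simp: inj_on_def)
    ultimately show ?thesis by simp
  qed
  with v(1) show thesis by (rule that)
qed

theorem mainTheorem3:
  fixes V I :: nat and a b :: "nat \<Rightarrow> nat"
    and zp zm xp xm :: "nat \<Rightarrow> complex" and t :: "nat \<Rightarrow> real"
  assumes "legs_ok V I a b"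
    and "diagram_connected V I a b"
    and "oriented V I a b (I + 1 - V)"
    and "V \<ge> 2"
    and "no_tadpoles I a b"
    and "\<forall>j<I. Im (zp j) > 0 \<and> Im (xp j) > 0 \<and> Im (zm j) < 0 \<and> Im (xm j) < 0"
    and "inj_on t {..<V}"
  shows "(\<Sum>M\<in>Pow {..<V}. (-1) ^ card M *
            (\<Prod>j<I. p_marked a b zp zm xp xm M j (t (a j) - t (b j)))) = 0"
proof -
  obtain v where v: "v < V" and earliest: "\<And>u. u < V \<Longrightarrow> u \<noteq> v \<Longrightarrow> t v < t u"
    using obtain_earliest[of "{..<V}" t] assms(4,7) by (auto simp: lessThan_empty_iff)
  have "{..<V} = insert v ({..<V} - {v})" using v by auto
  also have "(\<Sum>M\<in>Pow \<dots>. (-1) ^ card M *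
      (\<Prod>j<I. p_marked a b zp zm xp xm M j (t (a j) - t (b j)))) = 0"
  proof (rule sum_Pow_insert_alternating_eq_0)
    fix M assume M: "M \<subseteq> {..<V} - {v}"
    show "(\<Prod>j<I. p_marked a b zp zm xp xm (insert v M) j (t (a j) - t (b j)))
        = (\<Prod>j<I. p_marked a b zp zm xp xm M j (t (a j) - t (b j)))"
    proof (rule prod.cong[OF refl])
      fix j assume "j \<in> {..<I}"
      then have "a j < V" "b j < V" "a j \<noteq> b j"
        using assms(1,5) by (auto simp: legs_ok_def no_tadpoles_def)
      with M earliest show "p_marked a b zp zm xp xm (insert v M) j (t (a j) - t (b j)) =
          p_marked a b zp zm xp xm M j (t (a j) - t (b j))"
        by (intro p_marked_insert_earliest) auto
    qed
  qed auto
  finally show ?thesis .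
qed

end
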